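(* Let $K$ be an imaginary quadratic field, let $N=N_0N_1^2$ and $c$ be positive integers with $(c,N)=1$, and fix an embedding $K\hookrightarrow M_2(\mathbb{Q})$ with $K\cap M_2(\mathbb{Z})=K\cap R_0(N_0)=\mathcal{O}_c$. Let $h_0\in K$ be the point of the upper half plane fixed by $K^\times$. Let $\mathfrak{a}=\mathbb{Z}+\mathbb{Z}h_0^{-1}$ and $\mathcal{N}^{-1}=\mathbb{Z}+\mathbb{Z}N_0^{-1}h_0^{-1}$. Then $\mathrm{End}(\mathfrak{a}):=\{x\in K: x\mathfrak{a}\subset\mathfrak{a}\}=\mathcal{O}_c$ and $\mathrm{End}(\mathcal{N}^{-1})=\mathcal{O}_c$.
   Context: $\mathcal{O}_c=\mathbb{Z}+c\mathcal{O}_K$; $R_0(N_0)=\{A\in M_2(\mathbb{Z}): A\equiv\begin{pmatrix}*&*\\0&*\end{pmatrix}\pmod{N_0}\}$. Here $h_0$ lies in $K$ (viewed as a subfield of $\mathbb{C}$) and $K=\mathbb{Q}+\mathbb{Q}h_0$. *)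

theory Defs
  imports "HOL-Analysis.Analysis" "HOL-Computational_Algebra.Polynomial"
begin

definition imag_quadratic_field :: "complex set \<Rightarrow> bool" where
  "imag_quadratic_field K \<longleftrightarrow>
     (\<exists>w. Im w \<noteq> 0 \<and> w\<^sup>2 \<in> \<rat> \<and> K = {of_rat a + of_rat b * w | a b. True})"

definition alg_int :: "complex \<Rightarrow> bool" where
  "alg_int x \<longleftrightarrow> (\<exists>p :: int poly. lead_coeff p = 1 \<and> poly (map_poly of_int p) x = 0)"

definition ring_of_integers :: "complex set \<Rightarrow> complex set" where
  "ring_of_integers K = {x \<in> K. alg_int x}"

definition order_c :: "complex set \<Rightarrow> int \<Rightarrow> complex set" where
  "order_c K c = {of_int n + of_int c * y | n y. y \<in> ring_of_integers K}"

definition integral_mat :: "rat^2^2 \<Rightarrow> bool" where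
  "integral_mat A \<longleftrightarrow> (\<forall>i j. A $ i $ j \<in> \<int>)"

definition in_R0 :: "int \<Rightarrow> rat^2^2 \<Rightarrow> bool" where
  "in_R0 N0 A \<longleftrightarrow> integral_mat A \<and> (\<exists>k::int. A $ 2 $ 1 = of_int (N0 * k))"

definition ring_embedding :: "complex set \<Rightarrow> (complex \<Rightarrow> rat^2^2) \<Rightarrow> bool" where
  "ring_embedding K \<phi> \<longleftrightarrow>
     \<phi> 1 = mat 1 \<and>
     (\<forall>x\<in>K. \<forall>y\<in>K. \<phi> (x + y) = \<phi> x + \<phi> y \<and> \<phi> (x * y) = \<phi> x ** \<phi> y) \<and>
     inj_on \<phi> K"

definition moebius :: "rat^2^2 \<Rightarrow> complex \<Rightarrow> complex" where
  "moebius A z = (of_rat (A$1$1) * z + of_rat (A$1$2)) / (of_rat (A$2$1) * z + of_rat (A$2$2))"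

definition End_lat :: "complex set \<Rightarrow> complex set \<Rightarrow> complex set" where
  "End_lat K L = {x \<in> K. \<forall>y\<in>L. x * y \<in> L}"

end

theory Submission imports Defs begin

text \<open>Write \<open>x \<in> K\<close> as \<open>q + p h\<^sub>0\<close>, where \<open>h\<^sub>0\<^sup>2 = \<alpha> h\<^sub>0 + \<beta>\<close>. Because \<open>h\<^sub>0\<close> is a fixed point
  of \<open>\<phi>(h\<^sub>0)\<close>, the embedding is, up to a sign, the regular representation of \<open>K\<close> in the
  basis \<open>(h\<^sub>0, 1)\<close>, so \<open>\<phi>(x)\<close> is integral iff \<open>p, q, q + p\<alpha>, p\<beta>\<close> are integers. These are
  also exactly the conditions for \<open>x\<close> to preserve \<open>\<int> + \<int> h\<^sub>0\<^sup>-\<^sup>1\<close>, whence \<open>End(\<aa>) = \<O>\<^sub>c\<close>.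
  For \<open>\<int> + \<int> (N\<^sub>0 h\<^sub>0)\<^sup>-\<^sup>1\<close> the same computation yields the \<open>R\<^sub>0(N\<^sub>0)\<close> conditions, except that
  only \<open>N\<^sub>0 p\<beta> \<in> \<int>\<close> comes out. The missing \<open>p\<beta> \<in> \<int>\<close> follows since such an \<open>x\<close> is an
  algebraic integer, so \<open>c x \<in> \<O>\<^sub>c\<close> gives \<open>c p\<beta> \<in> \<int>\<close>, and \<open>(c, N\<^sub>0) = 1\<close>.\<close>

lemma Re_complex_of_rat [simp]: "Re (of_rat u) = of_rat u"
  by (cases u) (simp add: of_rat_rat)

lemma Im_complex_of_rat [simp]: "Im (of_rat u) = 0"
  by (cases u) (simp add: of_rat_rat)

lemma rat_coords_unique:
  assumes "Im g \<noteq> 0" and "of_rat u * g + of_rat v = of_rat u' * g + of_rat v'"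
  shows "u = u' \<and> v = v'"
proof -
  have "of_rat u * Im g = of_rat u' * Im g"
    using arg_cong[OF assms(2), of Im] by simp
  hence "u = u'" using assms(1) by simp
  with assms(2) show ?thesis by simp
qed

lemma quadratic_discriminant_neg:
  assumes "Im h \<noteq> 0" and "h * h = of_rat \<alpha> * h + of_rat \<beta>"
  shows "\<alpha>\<^sup>2 + 4 * \<beta> < 0"
proof -
  have "2 * Re h * Im h = of_rat \<alpha> * Im h"
    using arg_cong[OF assms(2), of Im] by simp
  hence Re_h: "Re h = of_rat \<alpha> / 2" using assms(1) by (simp add: field_simps)
  have "Re h * Re h - Im h * Im h = of_rat \<alpha> * Re h + of_rat \<beta>"
    using arg_cong[OF assms(2), of Re] by simp
  hence "of_rat (\<alpha>\<^sup>2 + 4 * \<beta>) = - 4 * (Im h)\<^sup>2"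
    unfolding Re_h by (simp add: of_rat_add of_rat_mult of_rat_power power2_eq_square field_simps)
  also have "\<dots> < 0" using assms(1) by simp
  finally show ?thesis by simp
qed

lemma Ints_if_coprime_multiples:
  fixes t :: "'a::comm_ring_1"
  assumes "coprime a b" and "of_int a * t \<in> \<int>" and "of_int b * t \<in> \<int>"
  shows "t \<in> \<int>"
proof -
  obtain u v where "u * a + v * b = 1"
    using bezout_int[of a b] assms(1) by (auto simp: coprime_iff_gcd_eq_1)
  hence "t = of_int u * (of_int a * t) + of_int v * (of_int b * t)"
    by (metis (no_types, opaque_lifting) distrib_right mult.assoc mult_1 of_int_1 of_int_add of_int_mult)
  also have "\<dots> \<in> \<int>" using assms(2,3) by simp
  finally show ?thesis .
qed

lemma additive_on_scale_of_rat:
  fixes f :: "'a::field_char_0 \<Rightarrow> 'b::field_char_0"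
  assumes add: "\<forall>x\<in>K. \<forall>y\<in>K. f (x + y) = f x + f y"
    and scale_closed: "\<forall>x\<in>K. \<forall>r. of_rat r * x \<in> K" and y: "y \<in> K"
  shows "f (of_rat r * y) = of_rat r * f y"
proof -
  have int_closed: "of_int k * z \<in> K" if "z \<in> K" for k z
    using scale_closed that by (metis of_rat_of_int_eq)
  have f_int: "f (of_int k * z) = of_int k * f z" if z: "z \<in> K" for k z
  proof (induction k rule: int_induct[where k = 0])
    case base
    have "0 \<in> K" using int_closed[OF z, of 0] by simp
    hence "f (0 + 0) = f 0 + f 0" using add by blast
    then show ?case by simp
  next
    case (step1 i)
    have "f (of_int (i + 1) * z) = f (of_int i * z + z)" by (simp add: algebra_simps)
    then show ?case using add int_closed[OF z] z step1.IH by (simp add: algebra_simps)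
  next
    case (step2 i)
    have "f (of_int i * z) = f (of_int (i - 1) * z + z)" by (simp add: algebra_simps)
    also have "\<dots> = f (of_int (i - 1) * z) + f z" using add int_closed[OF z] z by blast
    finally show ?case using step2.IH by (simp add: algebra_simps)
  qed
  obtain k m where r: "r = of_int k / of_int m" and m: "m > 0"
    by (cases r) (auto simp: Fract_of_int_quotient)
  have ry: "of_rat r * y \<in> K" using scale_closed y by blast
  have "of_int m * (of_rat r * y) = of_int k * y"
    using m unfolding r by (simp add: of_rat_divide)
  hence "of_int m * f (of_rat r * y) = of_int k * f y"
    using f_int[OF ry, of m] f_int[OF y, of k] by metis
  thus ?thesis using m unfolding r by (simp add: of_rat_divide field_simps)
qed

definition lattice_inv :: "complex \<Rightarrow> complex set" where
  "lattice_inv g = {of_int m + of_int n / g | m n. True}"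

text \<open>If \<open>g\<^sup>2 = \<alpha> g + \<beta>\<close>, multiplication by \<open>q + p g\<close> has the matrix
  \<open>[[q + p\<alpha>, p\<beta>], [p, q]]\<close> in the basis \<open>(g, 1)\<close>; its entries are the ones tested.\<close>
definition integral_coords :: "rat \<Rightarrow> rat \<Rightarrow> rat \<Rightarrow> rat \<Rightarrow> bool" where
  "integral_coords \<alpha> \<beta> q p \<longleftrightarrow> p \<in> \<int> \<and> q \<in> \<int> \<and> q + p * \<alpha> \<in> \<int> \<and> p * \<beta> \<in> \<int>"

lemma of_rat_mem_lattice_inv_iff:
  assumes "Im g \<noteq> 0"
  shows "of_rat s + of_rat t / g \<in> lattice_inv g \<longleftrightarrow> s \<in> \<int> \<and> t \<in> \<int>"
proof
  have g: "g \<noteq> 0" using assms by auto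
  assume "of_rat s + of_rat t / g \<in> lattice_inv g"
  then obtain m n :: int where "of_rat s + of_rat t / g = of_int m + of_int n / g"
    by (auto simp: lattice_inv_def)
  hence "(of_rat s + of_rat t / g) * g = (of_int m + of_int n / g) * g" by simp
  hence "of_rat s * g + of_rat t = of_rat (of_int m) * g + of_rat (of_int n)"
    using g by (simp add: distrib_right)
  from rat_coords_unique[OF assms this] show "s \<in> \<int> \<and> t \<in> \<int>" by simp
next
  assume "s \<in> \<int> \<and> t \<in> \<int>"
  then obtain m n where "s = of_int m" "t = of_int n" by (auto elim!: Ints_cases)
  thus "of_rat s + of_rat t / g \<in> lattice_inv g" by (auto simp: lattice_inv_def)
qed

lemma mult_lattice_inv_subset_iff:
  assumes g: "Im g \<noteq> 0" and g_square: "g * g = of_rat \<alpha> * g + of_rat \<beta>"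
  shows "(\<forall>y\<in>lattice_inv g. (of_rat q + of_rat p * g) * y \<in> lattice_inv g)
      \<longleftrightarrow> integral_coords \<alpha> \<beta> q p" (is "(\<forall>y\<in>?L. ?x * y \<in> ?L) \<longleftrightarrow> _")
proof -
  have g0: "g \<noteq> 0" using g by auto
  have x_1: "?x * 1 = of_rat (q + p * \<alpha>) + of_rat (p * \<beta>) / g"
  proof -
    have "?x * g = of_rat q * g + of_rat p * (g * g)" by (simp add: algebra_simps)
    also have "\<dots> = of_rat (q + p * \<alpha>) * g + of_rat (p * \<beta>)"
      unfolding g_square by (simp add: of_rat_add of_rat_mult algebra_simps)
    finally have "?x * g = \<dots>" .
    thus ?thesis using g0 by (simp add: field_simps)
  qed
  have x_inv: "?x * (1 / g) = of_rat p + of_rat q / g" using g0 by (simp add: field_simps)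
  have one: "1 \<in> ?L" using of_rat_mem_lattice_inv_iff[OF g, of 1 0] by simp
  have inv: "1 / g \<in> ?L" using of_rat_mem_lattice_inv_iff[OF g, of 0 1] by simp
  show ?thesis
  proof
    assume "\<forall>y\<in>?L. ?x * y \<in> ?L"
    hence "?x * 1 \<in> ?L" "?x * (1 / g) \<in> ?L" using one inv by blast+
    thus "integral_coords \<alpha> \<beta> q p"
      unfolding x_1 x_inv of_rat_mem_lattice_inv_iff[OF g] integral_coords_def by blast
  next
    assume H: "integral_coords \<alpha> \<beta> q p"
    show "\<forall>y\<in>?L. ?x * y \<in> ?L"
    proof
      fix y assume "y \<in> ?L"
      then obtain m n :: int where y: "y = of_int m * 1 + of_int n * (1 / g)"
        by (auto simp: lattice_inv_def)
      have "?x * y = of_int m * (?x * 1) + of_int n * (?x * (1 / g))"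
        unfolding y by (simp add: algebra_simps)
      also have "\<dots> = of_rat (of_int m * (q + p * \<alpha>) + of_int n * p)
                   + of_rat (of_int m * (p * \<beta>) + of_int n * q) / g"
        unfolding x_1 x_inv by (simp add: of_rat_add of_rat_mult algebra_simps add_divide_distrib)
      finally show "?x * y \<in> ?L"
        using H by (simp add: of_rat_mem_lattice_inv_iff[OF g] integral_coords_def)
    qed
  qed
qed

lemma alg_int_quadratic:
  assumes "x * x - of_int t * x + of_int n = (0 :: complex)"
  shows "alg_int x"
  unfolding alg_int_def
proof (intro exI conjI)
  show "lead_coeff [:n, -t, 1:] = 1" by simp
  show "poly (map_poly of_int [:n, -t, 1:]) x = 0"
    using assms by (simp add: map_poly_pCons algebra_simps)
qed

lemma integral_coords_alg_int:
  assumes g_square: "g * g = of_rat \<alpha> * g + of_rat \<beta>" and "integral_coords \<alpha> \<beta> q p"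
  shows "alg_int (of_rat q + of_rat p * g)" (is "alg_int ?x")
proof -
  obtain P Q A B where P: "p = of_int P" and Q: "q = of_int Q"
      and A: "q + p * \<alpha> = of_int A" and B: "p * \<beta> = of_int B"
    using assms(2) unfolding integral_coords_def by (auto elim!: Ints_cases)
  have trace: "q + (q + p * \<alpha>) = of_int (Q + A)"
    and norm: "q * (q + p * \<alpha>) - p * (p * \<beta>) = of_int (Q * A - P * B)"
    unfolding A B by (simp_all add: P Q)
  have "?x * ?x - of_rat (q + (q + p * \<alpha>)) * ?x + of_rat (q * (q + p * \<alpha>) - p * (p * \<beta>))
      = of_rat p * of_rat p * (g * g - of_rat \<alpha> * g - of_rat \<beta>)"
    unfolding of_rat_add of_rat_mult of_rat_diff by algebra
  also have "\<dots> = 0" using g_square by simp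
  finally have "?x * ?x - of_int (Q + A) * ?x + of_int (Q * A - P * B) = 0"
    unfolding trace norm of_rat_of_int_eq .
  thus ?thesis by (rule alg_int_quadratic)
qed

lemma moebius_fixed_point_entries:
  assumes h: "Im h \<noteq> 0" and h_square: "h * h = of_rat \<alpha> * h + of_rat \<beta>"
    and fixed: "moebius M h = h"
  shows "M$1$1 = M$2$1 * \<alpha> + M$2$2 \<and> M$1$2 = M$2$1 * \<beta>"
proof -
  define a b c d where "a = M$1$1" and "b = M$1$2" and "c = M$2$1" and "d = M$2$2"
  have fixed': "(of_rat a * h + of_rat b) / (of_rat c * h + of_rat d) = h"
    using fixed unfolding moebius_def a_def b_def c_def d_def .
  have "h \<noteq> 0" using h by auto
  hence "of_rat c * h + of_rat d \<noteq> 0" using fixed' by auto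
  hence "of_rat a * h + of_rat b = h * (of_rat c * h + of_rat d)"
    using fixed' by (simp add: divide_eq_eq mult.commute)
  also have "\<dots> = of_rat c * (h * h) + of_rat d * h" by (simp add: algebra_simps)
  also have "\<dots> = of_rat (c * \<alpha> + d) * h + of_rat (c * \<beta>)"
    unfolding h_square by (simp add: of_rat_add of_rat_mult algebra_simps)
  finally show ?thesis using rat_coords_unique[OF h] unfolding a_def b_def c_def d_def by blast
qed

text \<open>The last two hypotheses are the entries (1,1) and (2,1) of \<open>M\<^sup>2 = \<alpha> M + \<beta>\<close>
  for \<open>M = [[a, b], [c, d]]\<close>.\<close>
lemma fixed_point_matrix_cases:
  fixes a b c d \<alpha> \<beta> :: rat
  assumes disc: "\<alpha>\<^sup>2 + 4 * \<beta> \<noteq> 0" and c: "c \<noteq> 0"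
    and a: "a = c * \<alpha> + d" and b: "b = c * \<beta>"
    and sq11: "a * a + b * c = \<beta> + \<alpha> * a" and sq21: "c * a + d * c = \<alpha> * c"
  shows "c = 1 \<and> a = \<alpha> \<and> b = \<beta> \<and> d = 0 \<or> c = -1 \<and> a = 0 \<and> b = - \<beta> \<and> d = \<alpha>"
proof -
  have trace: "\<alpha> = a + d"
  proof -
    have "c * (a + d - \<alpha>) = 0" using sq21 by (simp add: algebra_simps)
    thus ?thesis using c by simp
  qed
  have "(1 - c\<^sup>2) * (\<alpha>\<^sup>2 + 4 * \<beta>) = 0" using sq11 a b trace by algebra
  hence "c = 1 \<or> c = -1" using disc by (simp add: power2_eq_1_iff)
  thus ?thesis using a b trace by auto
qed

lemma imag_quadratic_field_square:
  assumes "imag_quadratic_field K" and "h \<in> K"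
  obtains \<alpha> \<beta> where "h * h = of_rat \<alpha> * h + of_rat \<beta>"
proof -
  obtain w where w: "w\<^sup>2 \<in> \<rat>" "K = {of_rat a + of_rat b * w |a b. True}"
    using assms(1) unfolding imag_quadratic_field_def by blast
  obtain a b where h: "h = of_rat a + of_rat b * w" using assms(2) w(2) by blast
  obtain r where r: "w\<^sup>2 = of_rat r" using w(1) by (auto elim: Rats_cases)
  have "h * h = of_rat (2 * a) * h + of_rat (b\<^sup>2 * r - a\<^sup>2)"
    unfolding h of_rat_add of_rat_mult of_rat_diff of_rat_power r[symmetric] of_rat_numeral_eq
    by algebra
  thus thesis by (rule that)
qed

locale fixed_point_embedding =
  fixes K :: "complex set" and \<phi> :: "complex \<Rightarrow> rat^2^2" and h0 :: complex and \<alpha> \<beta> :: rat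
  assumes K_eq: "K = {of_rat a + of_rat b * h0 | a b. True}"
    and embedding: "ring_embedding K \<phi>"
    and Im_h0: "Im h0 \<noteq> 0"
    and h0_fixed: "moebius (\<phi> h0) h0 = h0"
    and h0_square: "h0 * h0 = of_rat \<alpha> * h0 + of_rat \<beta>"
begin

lemma coords_mem_K: "of_rat q + of_rat p * h0 \<in> K"
  using K_eq by blast

lemma K_coords:
  assumes "x \<in> K"
  obtains q p where "x = of_rat q + of_rat p * h0"
  using assms K_eq by blast

lemma phi_add: "x \<in> K \<Longrightarrow> y \<in> K \<Longrightarrow> \<phi> (x + y) = \<phi> x + \<phi> y"
  and phi_mult: "x \<in> K \<Longrightarrow> y \<in> K \<Longrightarrow> \<phi> (x * y) = \<phi> x ** \<phi> y"
  using embedding unfolding ring_embedding_def by auto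

lemma phi_coords_entry:
  "\<phi> (of_rat q + of_rat p * h0) $ i $ j = q * mat 1 $ i $ j + p * \<phi> h0 $ i $ j"
proof -
  have scale_closed: "\<forall>x\<in>K. \<forall>r. of_rat r * x \<in> K"
  proof (intro ballI allI)
    fix x r assume "x \<in> K"
    then obtain a b where "x = of_rat a + of_rat b * h0" by (rule K_coords)
    hence "of_rat r * x = of_rat (r * a) + of_rat (r * b) * h0"
      by (simp add: of_rat_mult algebra_simps)
    thus "of_rat r * x \<in> K" using coords_mem_K by simp
  qed
  have one: "1 \<in> K" and h0: "h0 \<in> K" using coords_mem_K[of 1 0] coords_mem_K[of 0 1] by simp_all
  have entry_scale: "\<phi> (of_rat r * y) $ i $ j = r * \<phi> y $ i $ j" if "y \<in> K" for r y
    using additive_on_scale_of_rat[of K "\<lambda>z. \<phi> z $ i $ j", OF _ scale_closed that] phi_add by simp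
  have "\<phi> (of_rat q * 1 + of_rat p * h0) = \<phi> (of_rat q * 1) + \<phi> (of_rat p * h0)"
    using phi_add scale_closed one h0 by blast
  moreover have "\<phi> 1 = mat 1" using embedding unfolding ring_embedding_def by simp
  ultimately show ?thesis using entry_scale[OF one] entry_scale[OF h0] by simp
qed


lemma phi_h0_cases:
  "\<phi> h0$2$1 = 1 \<and> \<phi> h0$1$1 = \<alpha> \<and> \<phi> h0$1$2 = \<beta> \<and> \<phi> h0$2$2 = 0 \<or>
   \<phi> h0$2$1 = -1 \<and> \<phi> h0$1$1 = 0 \<and> \<phi> h0$1$2 = - \<beta> \<and> \<phi> h0$2$2 = \<alpha>"
proof -
  define a b c d where "a = \<phi> h0$1$1" and "b = \<phi> h0$1$2" and "c = \<phi> h0$2$1" and "d = \<phi> h0$2$2"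
  have fixed: "a = c * \<alpha> + d" "b = c * \<beta>"
    using moebius_fixed_point_entries[OF Im_h0 h0_square h0_fixed]
    unfolding a_def b_def c_def d_def by simp_all
  have "c \<noteq> 0"
  proof
    assume "c = 0"
    hence "\<phi> h0 = \<phi> (of_rat a + of_rat 0 * h0)"
      unfolding vec_eq_iff forall_2 phi_coords_entry using fixed
      by (simp add: a_def b_def c_def d_def mat_def)
    hence "h0 = of_rat a"
      using embedding coords_mem_K[of 0 1] coords_mem_K[of a 0]
      unfolding ring_embedding_def inj_on_def by auto
    thus False using Im_h0 by simp
  qed
  moreover have "(\<phi> h0 ** \<phi> h0) $ i $ j = \<beta> * mat 1 $ i $ j + \<alpha> * \<phi> h0 $ i $ j" for i j
  proof -
    have "\<phi> h0 ** \<phi> h0 = \<phi> (of_rat \<beta> + of_rat \<alpha> * h0)"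
      using phi_mult[of h0 h0] coords_mem_K[of 0 1] h0_square by (simp add: add.commute)
    thus ?thesis by (simp add: phi_coords_entry)
  qed
  hence "a * a + b * c = \<beta> + \<alpha> * a" "c * a + d * c = \<alpha> * c"
    unfolding a_def b_def c_def d_def by (simp_all add: matrix_matrix_mult_def sum_2 mat_def)
  moreover have "\<alpha>\<^sup>2 + 4 * \<beta> \<noteq> 0" using quadratic_discriminant_neg[OF Im_h0 h0_square] by simp
  ultimately show ?thesis
    using fixed_point_matrix_cases[of \<alpha> \<beta> c a d b] fixed unfolding a_def b_def c_def d_def by blast
qed

lemma integral_mat_phi_iff:
  "integral_mat (\<phi> (of_rat q + of_rat p * h0)) \<longleftrightarrow> integral_coords \<alpha> \<beta> q p"
  using phi_h0_cases unfolding integral_mat_def forall_2 phi_coords_entry integral_coords_def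
  by (elim disjE) (auto simp: mat_def minus_in_Ints_iff)

lemma in_R0_phi_iff:
  "in_R0 N0 (\<phi> (of_rat q + of_rat p * h0)) \<longleftrightarrow> integral_coords \<alpha> \<beta> q p \<and> (\<exists>k. p = of_int (N0 * k))"
proof -
  have "\<phi> (of_rat q + of_rat p * h0) $ 2 $ 1 = p \<or> \<phi> (of_rat q + of_rat p * h0) $ 2 $ 1 = - p"
    using phi_h0_cases by (auto simp: phi_coords_entry mat_def)
  hence "(\<exists>k. \<phi> (of_rat q + of_rat p * h0) $ 2 $ 1 = of_int (N0 * k)) \<longleftrightarrow> (\<exists>k. p = of_int (N0 * k))"
    by (metis add.inverse_inverse mult_minus_right of_int_minus)
  thus ?thesis unfolding in_R0_def integral_mat_phi_iff by blast
qed


lemma End_lat_lattice_inv_h0: "End_lat K (lattice_inv h0) = {x \<in> K. integral_mat (\<phi> x)}"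
  unfolding End_lat_def
proof (intro Collect_cong conj_cong refl)
  fix x assume "x \<in> K"
  then obtain q p where x: "x = of_rat q + of_rat p * h0" by (rule K_coords)
  show "(\<forall>y\<in>lattice_inv h0. x * y \<in> lattice_inv h0) \<longleftrightarrow> integral_mat (\<phi> x)"
    unfolding x mult_lattice_inv_subset_iff[OF Im_h0 h0_square] integral_mat_phi_iff ..
qed

lemma End_lat_lattice_inv_scaled:
  assumes N0: "N0 \<noteq> 0" and coprime: "coprime c N0"
    and R0: "{x \<in> K. in_R0 N0 (\<phi> x)} = order_c K c"
  shows "End_lat K (lattice_inv (of_int N0 * h0)) = order_c K c"
proof -
  define g where "g = of_int N0 * h0"
  have Im_g: "Im g \<noteq> 0" using Im_h0 N0 unfolding g_def by simp
  have g_square: "g * g = of_rat (of_int N0 * \<alpha>) * g + of_rat (of_int N0 ^ 2 * \<beta>)"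
    unfolding g_def of_rat_mult of_rat_power of_rat_of_int_eq power2_eq_square
    using h0_square by algebra
  have x_g: "of_rat q + of_rat p * h0 = of_rat q + of_rat (p / of_int N0) * g" for q p
    unfolding g_def using N0 by (simp add: of_rat_divide)
  have scaled_coords_iff: "integral_coords (of_int N0 * \<alpha>) (of_int N0 ^ 2 * \<beta>) q (p / of_int N0) \<longleftrightarrow>
      p / of_int N0 \<in> \<int> \<and> q \<in> \<int> \<and> q + p * \<alpha> \<in> \<int> \<and> of_int N0 * (p * \<beta>) \<in> \<int>" for q p
    unfolding integral_coords_def using N0 by (simp add: power2_eq_square mult.left_commute)
  show ?thesis
  proof (intro equalityI subsetI)
    fix x assume "x \<in> End_lat K (lattice_inv (of_int N0 * h0))"
    hence xK: "x \<in> K" and End: "\<forall>y\<in>lattice_inv g. x * y \<in> lattice_inv g"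
      unfolding End_lat_def g_def by auto
    obtain q p where x: "x = of_rat q + of_rat p * h0" using xK by (rule K_coords)
    have scaled: "integral_coords (of_int N0 * \<alpha>) (of_int N0 ^ 2 * \<beta>) q (p / of_int N0)"
      using End unfolding x x_g mult_lattice_inv_subset_iff[OF Im_g g_square] .
    hence coords: "p / of_int N0 \<in> \<int>" "q \<in> \<int>" "q + p * \<alpha> \<in> \<int>" "of_int N0 * (p * \<beta>) \<in> \<int>"
      unfolding scaled_coords_iff by blast+
    have "alg_int x"
      unfolding x x_g using g_square scaled by (rule integral_coords_alg_int)
    hence "of_int 0 + of_int c * x \<in> order_c K c"
      using xK unfolding order_c_def ring_of_integers_def by blast
    moreover have "of_int c * x = of_rat (of_int c * q) + of_rat (of_int c * p) * h0"
      unfolding x by (simp add: of_rat_mult algebra_simps)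
    ultimately have "in_R0 N0 (\<phi> (of_rat (of_int c * q) + of_rat (of_int c * p) * h0))"
      using R0 by auto
    hence "of_int c * (p * \<beta>) \<in> \<int>"
      unfolding in_R0_phi_iff integral_coords_def by (simp add: mult.assoc)
    hence "p * \<beta> \<in> \<int>" using Ints_if_coprime_multiples[OF coprime _ coords(4)] by blast
    moreover obtain k where "p / of_int N0 = of_int k" using coords(1) by (auto elim: Ints_cases)
    hence "p = of_int (N0 * k)" using N0 by (simp add: field_simps)
    ultimately have "in_R0 N0 (\<phi> x)"
      unfolding x in_R0_phi_iff integral_coords_def using coords by auto
    thus "x \<in> order_c K c" using R0 xK by blast
  next
    fix x assume "x \<in> order_c K c"
    with R0 have xK: "x \<in> K" and "in_R0 N0 (\<phi> x)" by auto
    obtain q p where x: "x = of_rat q + of_rat p * h0" using xK by (rule K_coords)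
    obtain k where "p = of_int (N0 * k)" and "integral_coords \<alpha> \<beta> q p"
      using \<open>in_R0 N0 (\<phi> x)\<close> unfolding x in_R0_phi_iff by blast
    hence "\<forall>y\<in>lattice_inv g. x * y \<in> lattice_inv g"
      unfolding x x_g mult_lattice_inv_subset_iff[OF Im_g g_square] scaled_coords_iff
      using N0 by (simp add: integral_coords_def)
    thus "x \<in> End_lat K (lattice_inv (of_int N0 * h0))"
      using xK unfolding End_lat_def g_def by blast
  qed
qed

end

theorem lemma2p4:
  fixes K :: "complex set" and \<phi> :: "complex \<Rightarrow> rat^2^2"
    and N N0 N1 c :: int and h0 :: complex
  assumes "imag_quadratic_field K"
    and "N0 > 0" and "N1 > 0" and "N = N0 * N1\<^sup>2" and "c > 0" and "coprime c N"
    and "ring_embedding K \<phi>"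
    and "{x \<in> K. integral_mat (\<phi> x)} = order_c K c"
    and "{x \<in> K. in_R0 N0 (\<phi> x)} = order_c K c"
    and "Im h0 > 0"
    and "\<forall>x\<in>K - {0}. moebius (\<phi> x) h0 = h0"
    and "h0 \<in> K"
    and "K = {of_rat a + of_rat b * h0 | a b. True}"
  shows "End_lat K {of_int m + of_int n / h0 | m n. True} = order_c K c
       \<and> End_lat K {of_int m + of_int n / (of_int N0 * h0) | m n. True} = order_c K c"
proof -
  obtain \<alpha> \<beta> where h0_square: "h0 * h0 = of_rat \<alpha> * h0 + of_rat \<beta>"
    using imag_quadratic_field_square assms(1,12) by blast
  have "h0 \<noteq> 0" using assms(10) by auto
  interpret fixed_point_embedding K \<phi> h0 \<alpha> \<beta>
    using assms(7,10-13) h0_square \<open>h0 \<noteq> 0\<close> by unfold_locales auto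
  have "coprime c N0" using assms(4,6) by simp
  thus ?thesis
    using End_lat_lattice_inv_h0 End_lat_lattice_inv_scaled assms(2,8,9)
    unfolding lattice_inv_def by simp
qed

end
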